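(* For every planar rooted tree $t$, the antipode $S$ of $\mathcal{H}$ satisfies $S(t)=-\sum_{c}(-1)^{n_c}W^c(t)$, where the sum runs over all left cuts $c$ of $t$ (including the empty cut).
   Context: Planar rooted trees have their children linearly ordered left to right; a planar forest is a finite, possibly empty, sequence of planar rooted trees; $\mathcal{H}$ is the free associative unital algebra over a field $K$ on planar rooted trees, with basis the planar forests and product concatenation. $B^+(F)$ is the tree obtained by grafting the trees of $F$ on a new common root; $\varepsilon(F)=\delta_{F,1}$. $\Delta$ is the unique linear map with $\Delta(1)=1\otimes1$, $\Delta(xy)=(x\otimes1)\Delta(y)+\Delta(x)(1\otimes y)-x\otimes y$, $\Delta(B^+(x))=B^+(x)\otimes 1+(\mathrm{Id}\otimes B^+)\Delta(x)$; with it $\mathcal{H}$ is a graded infinitesimal bialgebra, and its antipode $S$ is the inverse of $\mathrm{Id}$ for the convolution product $f\star g=m\circ(f\otimes g)\circ\Delta$ on linear endomorphisms (unit $1\varepsilon$). Orders on vertices: $s\geq_{high}s'$ iff $s'=s$ or $s'$ is an ancestor of $s$; for $\geq_{high}$-incomparable $s,s'$ in a forest $t_1\cdots t_n$, $s\geq_{left}s'$ iff $s\in t_i,s'\in t_j$ with $i<j$, or both lie in $t_i$ and $s\geq_{left}s'$ in the forest obtained from $t_i$ by deleting its root (recursively); $s\geq_{h,l}s'$ iff $s\geq_{high}s'$ or $s\geq_{left}s'$ (a total order). For a tree $t$, let $s$ be its greatest vertex for $\geq_{h,l}$ (its leftmost leaf). A left edge is an edge on the path from the root to $s$. A left cut $c$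 is a (possibly empty) set of left edges; cutting them splits $t$ into trees $t_1,\dots,t_n$ indexed so that their roots satisfy $r_1\geq_{h,l}\cdots\geq_{h,l}r_n$ in $t$; $W^c(t)=t_1\cdots t_n$, and $n_c$ is the number of edges in $c$. *)

theory Defs
  imports Main "HOL-Library.Poly_Mapping" "HOL-Library.Sublist"
begin

text \<open>A planar rooted tree is a root together with the (left-to-right ordered) list of
  its subtrees; a planar forest is a finite list of planar rooted trees.\<close>
datatype ptree = Node "ptree list"

type_synonym forest = "ptree list"

definition Bplus :: "forest \<Rightarrow> ptree" where
  "Bplus F = Node F"

text \<open>Elements of H: finite K-linear combinations of planar forests (the basis);
  elements of H (x) H: finite linear combinations of pairs of forests (basis F (x) G).\<close>
type_synonym 'k H = "forest \<Rightarrow>\<^sub>0 'k"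
type_synonym 'k HH = "(forest \<times> forest) \<Rightarrow>\<^sub>0 'k"

definition lext :: "('a \<Rightarrow> ('b \<Rightarrow>\<^sub>0 'k::field)) \<Rightarrow> ('a \<Rightarrow>\<^sub>0 'k) \<Rightarrow> ('b \<Rightarrow>\<^sub>0 'k)" where
  "lext f p = (\<Sum>a\<in>Poly_Mapping.keys p. Poly_Mapping.map (\<lambda>x. Poly_Mapping.lookup p a * x) (f a))"

text \<open>Basis element of H given by a forest, and the unit 1 (the empty forest).\<close>
definition bas :: "forest \<Rightarrow> 'k::field H" where
  "bas F = Poly_Mapping.single F 1"

definition bas2 :: "forest \<Rightarrow> forest \<Rightarrow> 'k::field HH" where
  "bas2 F G = Poly_Mapping.single (F, G) 1"

definition hmul :: "'k::field H \<Rightarrow> 'k H \<Rightarrow> 'k H" where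
  "hmul x y = lext (\<lambda>F. lext (\<lambda>G. bas (F @ G)) y) x"

text \<open>Delta on basis elements, following the defining recursion:
  Delta(1) = 1 (x) 1,
  Delta(x y) = (x (x) 1) Delta(y) + Delta(x) (1 (x) y) - x (x) y  (used with x a tree),
  Delta(B+(x)) = B+(x) (x) 1 + (Id (x) B+) Delta(x).\<close>
fun deltaF :: "forest \<Rightarrow> 'k::field HH" and deltaT :: "ptree \<Rightarrow> 'k::field HH" where
  "deltaF [] = bas2 [] []"
| "deltaF (t # F) =
     lext (\<lambda>(a, b). bas2 (t # a) b) (deltaF F)
   + lext (\<lambda>(a, b). bas2 a (b @ F)) (deltaT t)
   - bas2 [t] F"
| "deltaT (Node F) = bas2 [Node F] [] + lext (\<lambda>(a, b). bas2 a [Bplus b]) (deltaF F)"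

definition Delta :: "'k::field H \<Rightarrow> 'k HH" where
  "Delta x = lext deltaF x"

text \<open>A linear endomorphism of H is determined by (and identified with) its values on the
  basis of forests.\<close>
type_synonym 'k endo = "forest \<Rightarrow> 'k H"

definition conv :: "'k::field endo \<Rightarrow> 'k endo \<Rightarrow> 'k endo" where
  "conv f g F = lext (\<lambda>(a, b). hmul (f a) (g b)) (deltaF F)"

definition idH :: "'k::field endo" where
  "idH F = bas F"

definition unitE :: "'k::field endo" where
  "unitE F = (if F = [] then bas [] else 0)"

definition antipode :: "'k::field endo" where
  "antipode = (THE S. conv S idH = unitE \<and> conv idH S = unitE)"

text \<open>Vertices of a tree are addressed by positions: the root is [], and the i-th child
  (0-based, left to right) of the vertex at p is at p @ [i].\<close>
lemma size_nth_less: "i < length ts \<Longrightarrow> size (ts ! i) < Suc (size_list size ts)"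
  by (metis le_imp_less_Suc nth_mem size_list_estimation' order_refl)

lemma size_zip_less: "(a, b) \<in> set (zip xs ts) \<Longrightarrow> size b < Suc (size_list size ts)"
  by (metis le_imp_less_Suc set_zip_rightD size_list_estimation' order_refl)

function positions :: "ptree \<Rightarrow> nat list set" where
  "positions (Node ts) = insert [] (\<Union>i<length ts. (\<lambda>p. i # p) ` positions (ts ! i))"
  by pat_completeness auto
termination
  by (relation "measure size") (auto intro: size_nth_less)

fun subtree :: "ptree \<Rightarrow> nat list \<Rightarrow> ptree" where
  "subtree t [] = t"
| "subtree (Node ts) (i # p) = subtree (ts ! i) p"

text \<open>s >=_high s' iff s' = s or s' is an ancestor of s.\<close>
definition geq_high :: "nat list \<Rightarrow> nat list \<Rightarrow> bool" where
  "geq_high s s' \<longleftrightarrow> prefix s' s"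

text \<open>For high-incomparable s, s': s >=_left s' iff, below their deepest common ancestor,
  s lies in a subtree to the left of the subtree containing s' (this is the recursive
  definition of the paper unfolded).\<close>
definition geq_left :: "nat list \<Rightarrow> nat list \<Rightarrow> bool" where
  "geq_left s s' \<longleftrightarrow> \<not> prefix s s' \<and> \<not> prefix s' s \<and>
     (\<exists>u i j p q. s = u @ i # p \<and> s' = u @ j # q \<and> i < j)"

definition geq_hl :: "nat list \<Rightarrow> nat list \<Rightarrow> bool" where
  "geq_hl s s' \<longleftrightarrow> geq_high s s' \<or> geq_left s s'"

text \<open>The greatest vertex of t for >=_{h,l} (its leftmost leaf).\<close>
definition greatest_vertex :: "ptree \<Rightarrow> nat list" where
  "greatest_vertex t = (THE s. s \<in> positions t \<and> (\<forall>s'\<in>positions t. geq_hl s s'))"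

text \<open>An edge is identified with its lower endpoint (a non-root vertex).  Left edges are the
  edges on the path from the root to the greatest vertex.\<close>
definition left_edges :: "ptree \<Rightarrow> nat list set" where
  "left_edges t = {v. v \<noteq> [] \<and> prefix v (greatest_vertex t)}"

definition left_cuts :: "ptree \<Rightarrow> nat list set set" where
  "left_cuts t = Pow (left_edges t)"

text \<open>prune P p t: delete from t (whose root sits at position p in the ambient tree) every
  subtree whose root position satisfies P.\<close>
function prune :: "(nat list \<Rightarrow> bool) \<Rightarrow> nat list \<Rightarrow> ptree \<Rightarrow> ptree" where
  "prune P p (Node ts) =
     Node (map (\<lambda>(i, s). prune P (p @ [i]) s)
               (filter (\<lambda>(i, s). \<not> P (p @ [i])) (zip [0..<length ts] ts)))"
  by pat_completeness auto
termination
  by (relation "measure (\<lambda>(P, p, t). size t)") (auto intro: size_zip_less)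

text \<open>The tree of the cut forest whose root is the vertex r (r is [] or r \<in> c).\<close>
definition cut_piece :: "ptree \<Rightarrow> nat list set \<Rightarrow> nat list \<Rightarrow> ptree" where
  "cut_piece t c r = prune (\<lambda>w. w \<in> c) r (subtree t r)"

definition cut_roots :: "ptree \<Rightarrow> nat list set \<Rightarrow> nat list list" where
  "cut_roots t c = (THE rs. distinct rs \<and> set rs = insert [] c \<and> sorted_wrt geq_hl rs)"

definition Wc :: "ptree \<Rightarrow> nat list set \<Rightarrow> forest" where
  "Wc t c = map (cut_piece t c) (cut_roots t c)"

end

theory Submission
  imports Defs
begin

text \<open>List the vertices of a forest \<open>F\<close> in post-order (children from left to right, then the
  root).  The first \<open>k\<close> vertices span a forest \<open>F'\<^sub>k\<close>, the remaining ones a forest \<open>F''\<^sub>k\<close>, and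
  \<open>\<Delta>(F) = \<Sum>\<^sub>k F'\<^sub>k \<otimes> F''\<^sub>k\<close>.  Hence the antipode obeys \<open>S(F) = - \<Sum>\<^sub>k\<^sub><\<^sub>|\<^sub>F\<^sub>| S(F'\<^sub>k) F''\<^sub>k\<close>,
  which forces \<open>S\<close> to vanish on forests of at least two trees and then yields
  \<open>S(B\<^sup>+(t\<^sub>1 ts)) = g(S(t\<^sub>1)) - S(t\<^sub>1) B\<^sup>+(ts)\<close>, where \<open>g\<close> grafts the last tree of a forest together
  with \<open>ts\<close> on a new root.  The signed sum over left cuts obeys the same recursion: the leftmost
  leaf of \<open>B\<^sup>+(t\<^sub>1 ts)\<close> is that of \<open>t\<^sub>1\<close>, and a left cut either keeps the edge to \<open>t\<^sub>1\<close>, so that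
  the last piece of a left cut of \<open>t\<^sub>1\<close> is grafted with \<open>ts\<close>, or cuts it, which appends
  \<open>B\<^sup>+(ts)\<close> and flips the sign.\<close>

lemma lookup_lext:
  "Poly_Mapping.lookup (lext f p) b =
     (\<Sum>a\<in>Poly_Mapping.keys p. Poly_Mapping.lookup p a * Poly_Mapping.lookup (f a) b)"
  unfolding lext_def
  by (simp add: lookup_sum map.rep_eq when_def cong: if_cong) (rule sum.cong, auto)

lemma lookup_lext_superset:
  assumes "finite A" "Poly_Mapping.keys p \<subseteq> A"
  shows "Poly_Mapping.lookup (lext f p) b =
           (\<Sum>a\<in>A. Poly_Mapping.lookup p a * Poly_Mapping.lookup (f a) b)"
  unfolding lookup_lext
  by (rule sum.mono_neutral_left) (use assms in \<open>auto simp: in_keys_iff\<close>)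

lemma lext_zero [simp]: "lext f 0 = 0"
  by (simp add: lext_def)

lemma lext_add: "lext f (p + q) = lext f p + lext f q"
proof (rule poly_mapping_eqI)
  fix b
  let ?A = "Poly_Mapping.keys p \<union> Poly_Mapping.keys q"
  have "Poly_Mapping.keys (p + q) \<subseteq> ?A"
    by (simp add: keys_add)
  then show "Poly_Mapping.lookup (lext f (p + q)) b = Poly_Mapping.lookup (lext f p + lext f q) b"
    by (simp add: lookup_add lookup_lext_superset[of ?A] distrib_right sum.distrib)
qed

lemma lext_uminus: "lext f (- p) = - lext f p"
  by (rule poly_mapping_eqI) (simp add: lookup_lext lookup_uminus sum_negf keys_def)

lemma lext_sum: "lext f (\<Sum>i\<in>I. g i) = (\<Sum>i\<in>I. lext f (g i))"
  by (induction I rule: infinite_finite_induct) (auto simp: lext_add)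

lemma lext_single: "lext f (Poly_Mapping.single a c) = Poly_Mapping.map (\<lambda>x. c * x) (f a)"
  by (rule poly_mapping_eqI) (auto simp: lookup_lext map.rep_eq when_def)

lemma lext_bas [simp]: "lext f (bas a) = f a"
  by (rule poly_mapping_eqI) (auto simp: bas_def lookup_lext map.rep_eq when_def)

lemma lext_bas2 [simp]: "lext f (bas2 a b) = f (a, b)"
  by (rule poly_mapping_eqI) (auto simp: bas2_def lookup_lext map.rep_eq when_def)

lemma lext_sum_fun: "lext (\<lambda>a. \<Sum>i\<in>I. g i a) p = (\<Sum>i\<in>I. lext (g i) p)"
  by (rule poly_mapping_eqI)
    (simp add: lookup_lext lookup_sum sum_distrib_left sum.swap[of _ I])

lemma lext_lext: "lext f (lext g p) = lext (\<lambda>a. lext f (g a)) p"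
proof (rule poly_mapping_eqI)
  fix b
  let ?A = "\<Union>a\<in>Poly_Mapping.keys p. Poly_Mapping.keys (g a)"
  let ?c = "\<lambda>a c. Poly_Mapping.lookup p a * Poly_Mapping.lookup (g a) c * Poly_Mapping.lookup (f c) b"
  have fin: "finite ?A"
    by simp
  have keys: "Poly_Mapping.keys (lext g p) \<subseteq> ?A"
    by (force simp: in_keys_iff lookup_lext elim!: sum.not_neutral_contains_not_neutral)
  have "Poly_Mapping.lookup (lext f (lext g p)) b
      = (\<Sum>c\<in>?A. Poly_Mapping.lookup (lext g p) c * Poly_Mapping.lookup (f c) b)"
    by (rule lookup_lext_superset[OF fin keys])
  also have "\<dots> = (\<Sum>a\<in>Poly_Mapping.keys p. \<Sum>c\<in>?A. ?c a c)"
    by (simp add: lookup_lext sum_distrib_right sum.swap[of _ ?A])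
  also have "\<dots> = (\<Sum>a\<in>Poly_Mapping.keys p. Poly_Mapping.lookup p a * Poly_Mapping.lookup (lext f (g a)) b)"
  proof (rule sum.cong[OF refl])
    fix a
    assume "a \<in> Poly_Mapping.keys p"
    then have "Poly_Mapping.keys (g a) \<subseteq> ?A" by auto
    then show "(\<Sum>c\<in>?A. ?c a c) = Poly_Mapping.lookup p a * Poly_Mapping.lookup (lext f (g a)) b"
      by (simp add: lookup_lext_superset[OF fin] sum_distrib_left mult.assoc)
  qed
  finally show "Poly_Mapping.lookup (lext f (lext g p)) b = Poly_Mapping.lookup (lext (\<lambda>a. lext f (g a)) p) b"
    by (simp add: lookup_lext)
qed

lemma hmul_bas_bas [simp]: "hmul (bas F) (bas G) = bas (F @ G)"
  by (simp add: hmul_def)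

lemma hmul_bas_right: "hmul x (bas G) = lext (\<lambda>F. bas (F @ G)) x"
  by (simp add: hmul_def)

lemma hmul_single_bas: "hmul (Poly_Mapping.single F c) (bas G) = Poly_Mapping.single (F @ G) c"
  unfolding hmul_bas_right lext_single by (simp add: bas_def)

lemma hmul_assoc: "hmul (hmul x y) z = hmul x (hmul y z)"
  by (simp add: hmul_def lext_lext)

lemma hmul_sum_left: "hmul (\<Sum>i\<in>I. g i) z = (\<Sum>i\<in>I. hmul (g i) z)"
  by (simp add: hmul_def lext_sum)

lemma hmul_sum_right: "hmul x (\<Sum>i\<in>I. g i) = (\<Sum>i\<in>I. hmul x (g i))"
  by (simp add: hmul_def lext_sum lext_sum_fun)

lemma hmul_zero_left [simp]: "hmul 0 z = 0"
  by (simp add: hmul_def)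

lemma hmul_uminus_left: "hmul (- x) z = - hmul x z"
  by (simp add: hmul_def lext_uminus)

lemma lext_bas_eq [simp]: "lext bas p = p"
proof (rule poly_mapping_eqI)
  fix G
  have "Poly_Mapping.lookup (lext bas p) G
      = (\<Sum>F\<in>Poly_Mapping.keys p. if F = G then Poly_Mapping.lookup p F else 0)"
    unfolding lookup_lext by (rule sum.cong) (auto simp: bas_def lookup_single when_def)
  then show "Poly_Mapping.lookup (lext bas p) G = Poly_Mapping.lookup p G"
    by (simp add: sum.delta' in_keys_iff)
qed

lemma lext_zero_fun [simp]: "lext (\<lambda>a. 0) p = 0"
  by (rule poly_mapping_eqI) (simp add: lookup_lext)

lemma hmul_zero_right [simp]: "hmul x 0 = 0"
  by (simp add: hmul_def)

lemma hmul_one_left [simp]: "hmul (bas []) y = y"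
  and hmul_one_right [simp]: "hmul x (bas []) = x"
  by (simp_all add: hmul_def)

fun nverts :: "forest \<Rightarrow> nat" and nverts_tree :: "ptree \<Rightarrow> nat" where
  "nverts [] = 0"
| "nverts (t # F) = nverts_tree t + nverts F"
| "nverts_tree (Node F) = Suc (nverts F)"

lemma nverts_tree_pos: "nverts_tree t > 0"
  by (cases t) auto

lemma nverts_append [simp]: "nverts (F @ G) = nverts F + nverts G"
  by (induction F) auto

lemma nverts_eq_0_iff [simp]: "nverts F = 0 \<longleftrightarrow> F = []"
  and nverts_pos_iff [simp]: "0 < nverts F \<longleftrightarrow> F \<noteq> []"
  by (cases F; simp add: nverts_tree_pos add_pos_nonneg)+

fun split_verts :: "nat \<Rightarrow> forest \<Rightarrow> forest \<times> forest"
  and split_verts_tree :: "nat \<Rightarrow> ptree \<Rightarrow> forest \<times> forest" where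
  "split_verts k [] = ([], [])"
| "split_verts k (t # F) =
     (if k \<le> nverts_tree t then (fst (split_verts_tree k t), snd (split_verts_tree k t) @ F)
      else (t # fst (split_verts (k - nverts_tree t) F), snd (split_verts (k - nverts_tree t) F)))"
| "split_verts_tree k (Node F) =
     (if k \<le> nverts F then (fst (split_verts k F), [Node (snd (split_verts k F))])
      else ([Node F], []))"

definition take_verts :: "nat \<Rightarrow> forest \<Rightarrow> forest" where
  "take_verts k F = fst (split_verts k F)"

definition drop_verts :: "nat \<Rightarrow> forest \<Rightarrow> forest" where
  "drop_verts k F = snd (split_verts k F)"

lemma split_verts_0: "split_verts 0 F = ([], F)" "split_verts_tree 0 t = ([], [t])"
proof -
  have "k = 0 \<Longrightarrow> split_verts k F = ([], F)" "k = 0 \<Longrightarrow> split_verts_tree k t = ([], [t])" for k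
    by (induction k F and k t rule: split_verts_split_verts_tree.induct) auto
  then show "split_verts 0 F = ([], F)" "split_verts_tree 0 t = ([], [t])"
    by blast+
qed

lemma take_verts_0 [simp]: "take_verts 0 F = []"
  and drop_verts_0 [simp]: "drop_verts 0 F = F"
  by (simp_all add: take_verts_def drop_verts_def split_verts_0)

lemma split_verts_tree_all: "nverts_tree t \<le> k \<Longrightarrow> split_verts_tree k t = ([t], [])"
  by (cases t) auto

lemma split_verts_append_le:
  "k \<le> nverts X \<Longrightarrow> split_verts k (X @ G) = (take_verts k X, drop_verts k X @ G)"
  by (induction X arbitrary: k) (auto simp: take_verts_def drop_verts_def split_verts_0)

lemma split_verts_append_ge:
  "nverts X \<le> k \<Longrightarrow>
     split_verts k (X @ G) = (X @ take_verts (k - nverts X) G, drop_verts (k - nverts X) G)"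
proof (induction X arbitrary: k)
  case Nil
  then show ?case by (simp add: take_verts_def drop_verts_def)
next
  case (Cons t X)
  show ?case
  proof (cases "k \<le> nverts_tree t")
    case True
    with Cons.prems have "nverts X = 0" "k = nverts_tree t"
      by (simp_all del: nverts_eq_0_iff)
    then have "X = []" "k = nverts_tree t"
      by simp_all
    then show ?thesis
      by (simp add: split_verts_tree_all take_verts_def drop_verts_def split_verts_0)
  next
    case False
    with Cons show ?thesis by (simp add: take_verts_def drop_verts_def)
  qed
qed

lemma take_verts_append_le: "k \<le> nverts X \<Longrightarrow> take_verts k (X @ G) = take_verts k X"
  and drop_verts_append_le: "k \<le> nverts X \<Longrightarrow> drop_verts k (X @ G) = drop_verts k X @ G"
  using split_verts_append_le[of k X G] by (auto simp: take_verts_def drop_verts_def)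

lemma take_verts_append_ge:
  "nverts X \<le> k \<Longrightarrow> take_verts k (X @ G) = X @ take_verts (k - nverts X) G"
  and drop_verts_append_ge:
  "nverts X \<le> k \<Longrightarrow> drop_verts k (X @ G) = drop_verts (k - nverts X) G"
  using split_verts_append_ge[of X k G] by (auto simp: take_verts_def drop_verts_def)

lemma take_verts_all: "nverts F \<le> k \<Longrightarrow> take_verts k F = F"
  and drop_verts_all: "nverts F \<le> k \<Longrightarrow> drop_verts k F = []"
  using split_verts_append_ge[of F k "[]"] by (auto simp: take_verts_def drop_verts_def)

lemma take_drop_verts_Node:
  "k \<le> nverts H \<Longrightarrow> take_verts k [Node H] = take_verts k H"
  "k \<le> nverts H \<Longrightarrow> drop_verts k [Node H] = [Node (drop_verts k H)]"
  by (auto simp: take_verts_def drop_verts_def)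

lemma nverts_split_verts:
  "k \<le> nverts F \<Longrightarrow> nverts (take_verts k F) = k \<and> nverts (drop_verts k F) = nverts F - k"
  "k \<le> nverts_tree t \<Longrightarrow>
     nverts (fst (split_verts_tree k t)) = k \<and> nverts (snd (split_verts_tree k t)) = nverts_tree t - k"
  by (induction k F and k t rule: split_verts_split_verts_tree.induct)
    (auto simp: take_verts_def drop_verts_def split: if_splits)

lemma nverts_take_verts: "k \<le> nverts F \<Longrightarrow> nverts (take_verts k F) = k"
  and nverts_drop_verts: "k \<le> nverts F \<Longrightarrow> nverts (drop_verts k F) = nverts F - k"
  using nverts_split_verts(1) by auto

lemma take_verts_nonempty: "0 < k \<Longrightarrow> G \<noteq> [] \<Longrightarrow> take_verts k G \<noteq> []"
  by (cases "k \<le> nverts G") (auto simp: take_verts_all dest: nverts_take_verts)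

lemma deltaF_split_verts:
  "(deltaF F :: 'k::field HH) = (\<Sum>k\<in>{0..nverts F}. bas2 (take_verts k F) (drop_verts k F))"
  "(deltaT t :: 'k HH) =
     (\<Sum>k\<in>{0..nverts_tree t}. bas2 (fst (split_verts_tree k t)) (snd (split_verts_tree k t)))"
proof (induction F and t rule: deltaF_deltaT.induct)
  case 1
  then show ?case by (simp add: take_verts_def drop_verts_def)
next
  case (2 t F)
  let ?nt = "nverts_tree t" and ?nF = "nverts F"
  let ?b = "\<lambda>k. bas2 (take_verts k (t # F)) (drop_verts k (t # F)) :: 'k HH"
  let ?bt = "\<lambda>k. bas2 (fst (split_verts_tree k t)) (snd (split_verts_tree k t) @ F) :: 'k HH"
  let ?bF = "\<lambda>k. bas2 (t # take_verts k F) (drop_verts k F) :: 'k HH"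
  have "(\<Sum>k\<in>{0..?nt + ?nF}. ?b k) = (\<Sum>k\<in>{0..?nt}. ?b k) + (\<Sum>k\<in>{?nt + 1..?nt + ?nF}. ?b k)"
    by (rule sum.ub_add_nat) simp
  also have "(\<Sum>k\<in>{0..?nt}. ?b k) = (\<Sum>k\<in>{0..?nt}. ?bt k)"
    by (rule sum.cong) (auto simp: take_verts_def drop_verts_def)
  also have "(\<Sum>k\<in>{?nt + 1..?nt + ?nF}. ?b k) = (\<Sum>k\<in>{1..?nF}. ?b (k + ?nt))"
    using sum.shift_bounds_cl_nat_ivl[of ?b 1 ?nt ?nF] by (simp add: add.commute)
  also have "\<dots> = (\<Sum>k\<in>{1..?nF}. ?bF k)"
    by (rule sum.cong) (auto simp: take_verts_def drop_verts_def)
  also have "\<dots> = (\<Sum>k\<in>{0..?nF}. ?bF k) - bas2 [t] F"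
    by (simp add: sum.atLeast_Suc_atMost)
  finally have "(\<Sum>k\<in>{0..nverts (t # F)}. ?b k) = (\<Sum>k\<in>{0..?nF}. ?bF k) + (\<Sum>k\<in>{0..?nt}. ?bt k) - bas2 [t] F"
    by (simp add: algebra_simps)
  then show ?case
    by (simp add: 2 lext_sum case_prod_beta)
next
  case (3 F)
  have "(deltaT (Node F) :: 'k HH) =
      bas2 [Node F] [] + (\<Sum>k\<in>{0..nverts F}. bas2 (take_verts k F) [Node (drop_verts k F)])"
    by (simp add: 3 lext_sum Bplus_def)
  then show ?case
    by (simp add: add.commute take_verts_def drop_verts_def)
qed

lemma conv_split_verts:
  "conv f g F = (\<Sum>k\<in>{0..nverts F}. hmul (f (take_verts k F)) (g (drop_verts k F)))"
  by (simp add: conv_def deltaF_split_verts lext_sum)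

text \<open>Coassociativity of \<open>\<Delta>\<close>, expressed through the vertex splitting.\<close>
definition split_verts_coassoc :: "forest \<Rightarrow> bool" where
  "split_verts_coassoc F \<longleftrightarrow> (\<forall>j k. j \<le> k \<longrightarrow> k \<le> nverts F \<longrightarrow>
     take_verts j (take_verts k F) = take_verts j F \<and>
     drop_verts j (take_verts k F) = take_verts (k - j) (drop_verts j F) \<and>
     drop_verts (k - j) (drop_verts j F) = drop_verts k F)"

lemma split_verts_coassocD:
  assumes "split_verts_coassoc F" "j \<le> k" "k \<le> nverts F"
  shows "take_verts j (take_verts k F) = take_verts j F"
    and "drop_verts j (take_verts k F) = take_verts (k - j) (drop_verts j F)"
    and "drop_verts (k - j) (drop_verts j F) = drop_verts k F"
  using assms unfolding split_verts_coassoc_def by blast+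

lemma split_verts_coassoc_append:
  assumes X: "split_verts_coassoc X" and Y: "split_verts_coassoc Y"
  shows "split_verts_coassoc (X @ Y)"
  unfolding split_verts_coassoc_def
proof (intro allI impI)
  fix j k
  assume jk: "j \<le> k" and kn: "k \<le> nverts (X @ Y)"
  let ?a = "nverts X"
  consider "k \<le> ?a" | "j \<le> ?a" "?a < k" | "?a < j"
    by linarith
  then show "take_verts j (take_verts k (X @ Y)) = take_verts j (X @ Y) \<and>
      drop_verts j (take_verts k (X @ Y)) = take_verts (k - j) (drop_verts j (X @ Y)) \<and>
      drop_verts (k - j) (drop_verts j (X @ Y)) = drop_verts k (X @ Y)"
  proof cases
    case 1
    note XD = split_verts_coassocD[OF X jk 1]
    from jk 1 have "nverts (drop_verts j X) = ?a - j"
      by (simp add: nverts_drop_verts)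
    with jk 1 XD show ?thesis
      by (simp add: take_verts_append_le drop_verts_append_le)
  next
    case 2
    then have "nverts (drop_verts j X) = ?a - j" "k - j - (?a - j) = k - ?a"
      by (simp_all add: nverts_drop_verts)
    with 2 show ?thesis
      by (simp add: take_verts_append_le drop_verts_append_le take_verts_append_ge
          drop_verts_append_ge)
  next
    case 3
    have "j - ?a \<le> k - ?a" "k - ?a \<le> nverts Y" "k - ?a - (j - ?a) = k - j"
      using jk kn 3 by auto
    note YD = split_verts_coassocD[OF Y this(1,2)] this(3)
    from jk 3 YD show ?thesis
      by (simp add: take_verts_append_ge drop_verts_append_ge)
  qed
qed

lemma split_verts_coassoc_Node:
  assumes H: "split_verts_coassoc H"
  shows "split_verts_coassoc [Node H]"
  unfolding split_verts_coassoc_def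
proof (intro allI impI)
  fix j k
  assume jk: "j \<le> k" and kn: "k \<le> nverts [Node H]"
  show "take_verts j (take_verts k [Node H]) = take_verts j [Node H] \<and>
      drop_verts j (take_verts k [Node H]) = take_verts (k - j) (drop_verts j [Node H]) \<and>
      drop_verts (k - j) (drop_verts j [Node H]) = drop_verts k [Node H]"
  proof (cases "k \<le> nverts H")
    case True
    note HD = split_verts_coassocD[OF H jk True]
    from jk True have "nverts (drop_verts j H) = nverts H - j"
      by (simp add: nverts_drop_verts)
    with jk True HD show ?thesis
      by (simp add: take_drop_verts_Node)
  next
    case False
    with kn have all: "nverts [Node H] \<le> k" "nverts (drop_verts j [Node H]) \<le> k - j"
      using jk by (simp_all add: nverts_drop_verts)
    show ?thesis
      using take_verts_all[OF all(1)] drop_verts_all[OF all(1)]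
        take_verts_all[OF all(2)] drop_verts_all[OF all(2)] by simp
  qed
qed

lemma split_verts_coassoc_of_trees:
  "(\<And>t. t \<in> set F \<Longrightarrow> split_verts_coassoc [t]) \<Longrightarrow> split_verts_coassoc F"
proof (induction F)
  case Nil
  then show ?case by (simp add: split_verts_coassoc_def)
next
  case (Cons t F)
  then have "split_verts_coassoc [t]" "split_verts_coassoc F"
    by simp_all
  then show ?case
    using split_verts_coassoc_append[of "[t]" F] by simp
qed

lemma split_verts_coassoc: "split_verts_coassoc F"
proof (rule split_verts_coassoc_of_trees)
  show "split_verts_coassoc [t]" for t
  proof (induction t)
    case (Node ts)
    then show ?case
      by (rule split_verts_coassoc_Node[OF split_verts_coassoc_of_trees])
  qed
qed

lemma sum_triangle_swap:
  "(\<Sum>k\<in>{0..(n::nat)}. \<Sum>j\<in>{0..k}. A j k) =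
     (\<Sum>j\<in>{0..n}. \<Sum>i\<in>{0..n - j}. A j (j + i) :: 'a::comm_monoid_add)"
proof (induction n)
  case 0
  then show ?case by simp
next
  case (Suc n)
  have "(\<Sum>j\<in>{0..n}. \<Sum>i\<in>{0..Suc n - j}. A j (j + i)) =
      (\<Sum>j\<in>{0..n}. (\<Sum>i\<in>{0..n - j}. A j (j + i)) + A j (Suc n))"
  proof (rule sum.cong[OF refl])
    fix j
    assume "j \<in> {0..n}"
    then have "Suc n - j = Suc (n - j)" "j + Suc (n - j) = Suc n"
      by auto
    then show "(\<Sum>i\<in>{0..Suc n - j}. A j (j + i)) = (\<Sum>i\<in>{0..n - j}. A j (j + i)) + A j (Suc n)"
      by simp
  qed
  with Suc show ?case
    by (simp add: sum.distrib add.assoc)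
qed

lemma conv_drop_verts:
  assumes "j \<le> nverts F"
  shows "conv g h (drop_verts j F) =
           (\<Sum>i\<in>{0..nverts F - j}. hmul (g (take_verts i (drop_verts j F))) (h (drop_verts (j + i) F)))"
  unfolding conv_split_verts
proof (rule sum.cong)
  show "{0..nverts (drop_verts j F)} = {0..nverts F - j}"
    using assms by (simp add: nverts_drop_verts)
next
  fix i
  assume "i \<in> {0..nverts F - j}"
  with assms have "drop_verts i (drop_verts j F) = drop_verts (j + i) F"
    using split_verts_coassocD(3)[OF split_verts_coassoc, of j "j + i" F] by auto
  then show "hmul (g (take_verts i (drop_verts j F))) (h (drop_verts i (drop_verts j F))) =
      hmul (g (take_verts i (drop_verts j F))) (h (drop_verts (j + i) F))"
    by simp
qed

lemma conv_assoc: "conv (conv f g) h = conv f (conv g h)"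
proof
  fix F
  let ?n = "nverts F"
  let ?A = "\<lambda>j k. hmul (hmul (f (take_verts j F)) (g (take_verts (k - j) (drop_verts j F))))
                   (h (drop_verts k F))"
  have "conv (conv f g) h F = (\<Sum>k\<in>{0..?n}. \<Sum>j\<in>{0..k}. ?A j k)"
    unfolding conv_split_verts[of _ _ F]
    using split_verts_coassocD[OF split_verts_coassoc, of _ _ F]
    by (intro sum.cong refl) (simp add: conv_split_verts nverts_take_verts hmul_sum_left)
  also have "\<dots> = (\<Sum>j\<in>{0..?n}. \<Sum>i\<in>{0..?n - j}. ?A j (j + i))"
    by (rule sum_triangle_swap)
  also have "\<dots> = conv f (conv g h) F"
    unfolding conv_split_verts[of _ _ F]
    by (intro sum.cong refl) (simp add: conv_drop_verts hmul_sum_right hmul_assoc)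
  finally show "conv (conv f g) h F = conv f (conv g h) F" .
qed

lemma conv_unitE_right [simp]: "conv f unitE = f"
proof
  fix F
  have "hmul (f (take_verts k F)) (unitE (drop_verts k F)) = 0" if "k \<in> {0..nverts F} - {nverts F}" for k
    using that nverts_drop_verts[of k F] by (auto simp: unitE_def)
  then show "conv f unitE F = f F"
    unfolding conv_split_verts
    by (subst sum.remove[of _ "nverts F"]) (auto simp: take_verts_all drop_verts_all unitE_def)
qed

lemma conv_unitE_left [simp]: "conv unitE f = f"
proof
  fix F
  have "hmul (unitE (take_verts k F)) (f (drop_verts k F)) = 0" if "k \<in> {0..nverts F} - {0}" for k
    using that nverts_take_verts[of k F] by (auto simp: unitE_def)
  then show "conv unitE f F = f F"
    unfolding conv_split_verts
    by (subst sum.remove[of _ 0]) (auto simp: unitE_def)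
qed

lemma conv_inverse_unique:
  assumes "conv l g = unitE" "conv g r = unitE"
  shows "l = r"
proof -
  have "l = conv l (conv g r)"
    using assms(2) by simp
  also have "\<dots> = r"
    using assms(1) by (simp flip: conv_assoc)
  finally show ?thesis .
qed

text \<open>The convolution inverses of \<open>idH\<close> obtained by solving \<open>S \<star> Id = 1\<epsilon>\<close> and
  \<open>Id \<star> S = 1\<epsilon>\<close> for the term with the full forest.\<close>
function left_antipode :: "forest \<Rightarrow> 'k::field H" where
  "left_antipode F = (if F = [] then bas [] else
     - (\<Sum>k\<in>{0..<nverts F}. hmul (left_antipode (take_verts k F)) (bas (drop_verts k F))))"
  by auto
termination
  by (relation "measure nverts") (auto simp: nverts_take_verts)

function right_antipode :: "forest \<Rightarrow> 'k::field H" where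
  "right_antipode F = (if F = [] then bas [] else
     - (\<Sum>k\<in>{1..nverts F}. hmul (bas (take_verts k F)) (right_antipode (drop_verts k F))))"
  by auto
termination
  by (relation "measure nverts") (auto simp: nverts_drop_verts)

declare left_antipode.simps [simp del] right_antipode.simps [simp del]

lemma conv_left_antipode_idH: "conv left_antipode idH = unitE"
proof
  fix F
  have "conv left_antipode idH F =
      (\<Sum>k\<in>{0..<nverts F}. hmul (left_antipode (take_verts k F)) (bas (drop_verts k F))) +
      left_antipode F"
    unfolding conv_split_verts
    by (simp add: idH_def take_verts_all drop_verts_all atLeastLessThanSuc_atLeastAtMost[symmetric])
  then show "conv left_antipode idH F = unitE F"
    by (cases "F = []") (simp_all add: conv_split_verts idH_def unitE_def left_antipode.simps)
qed

lemma conv_idH_right_antipode: "conv idH right_antipode = unitE"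
proof
  fix F
  have "conv idH right_antipode F =
      right_antipode F + (\<Sum>k\<in>{1..nverts F}. hmul (bas (take_verts k F)) (right_antipode (drop_verts k F)))"
    unfolding conv_split_verts by (simp add: idH_def sum.atLeast_Suc_atMost)
  then show "conv idH right_antipode F = unitE F"
    by (cases "F = []") (simp_all add: conv_split_verts idH_def unitE_def right_antipode.simps)
qed

lemma antipode_eq_left_antipode: "antipode = left_antipode"
  unfolding antipode_def
proof (rule the_equality)
  show "conv left_antipode idH = unitE \<and> conv idH left_antipode = unitE"
    using conv_left_antipode_idH conv_idH_right_antipode
      [folded conv_inverse_unique[OF conv_left_antipode_idH conv_idH_right_antipode]]
    by (rule conjI)
next
  fix S
  assume "conv S idH = unitE \<and> conv idH S = unitE"
  then show "S = left_antipode"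
    using conv_inverse_unique conv_left_antipode_idH by metis
qed

lemma left_antipode_leaf: "left_antipode [Node []] = - bas [Node []]"
  by (simp add: left_antipode.simps)

lemma sum_atLeastLessThan_pick:
  "a < n \<Longrightarrow> (\<Sum>k\<in>{0..<n}. g k) = (\<Sum>k\<in>{0..<a}. g k) + g a + (\<Sum>k\<in>{Suc a..<n}. g k)"
proof -
  assume "a < n"
  then have "(\<Sum>k\<in>{0..<n}. g k) = (\<Sum>k\<in>{0..<a}. g k) + (\<Sum>k\<in>{a..<n}. g k)"
    by (intro sum.atLeastLessThan_concat[symmetric]) auto
  also have "(\<Sum>k\<in>{a..<n}. g k) = g a + (\<Sum>k\<in>{Suc a..<n}. g k)"
    by (rule sum.atLeast_Suc_lessThan) fact
  finally show ?thesis
    by (simp add: add.assoc)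
qed

lemma left_antipode_prefix_sum_vanish:
  "X \<noteq> [] \<Longrightarrow>
     (\<Sum>k\<in>{0..nverts X}. hmul (left_antipode (take_verts k (X @ G))) (bas (drop_verts k (X @ G)))) =
       (0 :: 'k::field H)"
proof -
  assume "X \<noteq> []"
  have "(\<Sum>k\<in>{0..nverts X}. hmul (left_antipode (take_verts k (X @ G))) (bas (drop_verts k (X @ G)))) =
      (\<Sum>k\<in>{0..nverts X}. hmul (hmul (left_antipode (take_verts k X)) (bas (drop_verts k X))) (bas G) :: 'k H)"
    by (rule sum.cong) (simp_all add: take_verts_append_le drop_verts_append_le hmul_assoc)
  also have "\<dots> = hmul (conv left_antipode idH X) (bas G)"
    by (simp add: conv_split_verts hmul_sum_left idH_def)
  finally show ?thesis
    using \<open>X \<noteq> []\<close> by (simp add: conv_left_antipode_idH unitE_def)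
qed

text \<open>The summands with \<open>k \<le> |t|\<close> add up to \<open>(S \<star> Id)(t) \<cdot> G = 0\<close>; the others vanish by
  induction, their first factor being a forest of at least two trees.\<close>
lemma left_antipode_Cons_vanish: "G \<noteq> [] \<Longrightarrow> (left_antipode (t # G) :: 'k::field H) = 0"
proof (induction "nverts (t # G)" arbitrary: t G rule: less_induct)
  case less
  let ?a = "nverts_tree t" and ?n = "nverts (t # G)"
  let ?g = "\<lambda>k. hmul (left_antipode (take_verts k (t # G))) (bas (drop_verts k (t # G))) :: 'k H"
  have high: "?g k = 0" if k: "k \<in> {Suc ?a..<?n}" for k
  proof -
    from k have tk: "take_verts k (t # G) = t # take_verts (k - ?a) G"
      using take_verts_append_ge[of "[t]" k G] by simp
    have "take_verts (k - ?a) G \<noteq> []"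
      using k less.prems by (intro take_verts_nonempty) auto
    moreover have "nverts (t # take_verts (k - ?a) G) < ?n"
      using k nverts_take_verts[of k "t # G"] tk by simp
    ultimately have "left_antipode (t # take_verts (k - ?a) G) = (0 :: 'k H)"
      using less.hyps by blast
    then show "?g k = 0"
      by (simp add: tk)
  qed
  have "?a < ?n" "nverts [t] = ?a"
    using less.prems by simp_all
  then have "(\<Sum>k\<in>{0..<?n}. ?g k) = (\<Sum>k\<in>{0..nverts [t]}. ?g k) + (\<Sum>k\<in>{Suc ?a..<?n}. ?g k)"
    by (simp add: sum_atLeastLessThan_pick sum.last_plus add.commute del: nverts.simps)
  with high left_antipode_prefix_sum_vanish[of "[t]" G] show ?case
    by (subst left_antipode.simps) simp
qed

definition graft_last :: "forest \<Rightarrow> forest \<Rightarrow> 'k::field H" where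
  "graft_last ts X = (if X = [] then 0 else bas (butlast X @ [Node (last X # ts)]))"

lemma lext_graft_last_hmul:
  "lext (graft_last ts) (hmul x (bas [u])) = hmul x (bas [Node (u # ts)])"
  by (simp add: hmul_bas_right lext_lext graft_last_def)

lemma split_verts_Node_Cons:
  fixes t1 :: ptree
  defines "a \<equiv> nverts_tree t1"
  shows "k < a \<Longrightarrow> \<exists>u. take_verts k [Node (t1 # ts)] = take_verts k [t1] \<and>
           drop_verts k [t1] = [u] \<and> drop_verts k [Node (t1 # ts)] = [Node (u # ts)]"
    and "take_verts a [Node (t1 # ts)] = [t1]" "drop_verts a [Node (t1 # ts)] = [Node ts]"
    and "a < k \<Longrightarrow> k < nverts [Node (t1 # ts)] \<Longrightarrow>
           take_verts k [Node (t1 # ts)] = t1 # take_verts (k - a) ts"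
proof -
  obtain H where t1: "t1 = Node H"
    by (cases t1)
  have Node: "take_verts k [Node (t1 # ts)] = take_verts k ([t1] @ ts)"
    "drop_verts k [Node (t1 # ts)] = [Node (drop_verts k ([t1] @ ts))]" if "k \<le> a + nverts ts" for k
    using that by (simp_all add: a_def take_drop_verts_Node)
  show "k < a \<Longrightarrow> \<exists>u. take_verts k [Node (t1 # ts)] = take_verts k [t1] \<and>
      drop_verts k [t1] = [u] \<and> drop_verts k [Node (t1 # ts)] = [Node (u # ts)]"
    using Node[of k]
    by (intro exI[of _ "Node (drop_verts k H)"]) (simp add: a_def t1 take_verts_def drop_verts_def)
  show "take_verts a [Node (t1 # ts)] = [t1]" "drop_verts a [Node (t1 # ts)] = [Node ts]"
    using Node[of a] by (simp_all add: a_def take_verts_def drop_verts_def split_verts_tree_all)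
  show "a < k \<Longrightarrow> k < nverts [Node (t1 # ts)] \<Longrightarrow>
      take_verts k [Node (t1 # ts)] = t1 # take_verts (k - a) ts"
    using Node[of k] by (simp add: a_def take_verts_def)
qed

lemma left_antipode_Node_Cons:
  "(left_antipode [Node (t1 # ts)] :: 'k::field H) =
     lext (graft_last ts) (left_antipode [t1]) - hmul (left_antipode [t1]) (bas [Node ts])"
proof -
  let ?F = "[Node (t1 # ts)]" and ?a = "nverts_tree t1"
  let ?g = "\<lambda>k. hmul (left_antipode (take_verts k ?F)) (bas (drop_verts k ?F)) :: 'k H"
  let ?g1 = "\<lambda>k. hmul (left_antipode (take_verts k [t1])) (bas (drop_verts k [t1])) :: 'k H"
  have "(\<Sum>k\<in>{0..<nverts ?F}. ?g k) = (\<Sum>k\<in>{0..<?a}. ?g k) + ?g ?a + (\<Sum>k\<in>{Suc ?a..<nverts ?F}. ?g k)"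
    by (rule sum_atLeastLessThan_pick) simp
  also have "(\<Sum>k\<in>{Suc ?a..<nverts ?F}. ?g k) = 0"
  proof (rule sum.neutral, rule ballI)
    fix k
    assume k: "k \<in> {Suc ?a..<nverts ?F}"
    then have "take_verts (k - ?a) ts \<noteq> []"
      by (intro take_verts_nonempty) auto
    with k show "?g k = 0"
      by (simp add: split_verts_Node_Cons(4) left_antipode_Cons_vanish)
  qed
  also have "?g ?a = hmul (left_antipode [t1]) (bas [Node ts])"
    by (simp add: split_verts_Node_Cons(2,3))
  also have "(\<Sum>k\<in>{0..<?a}. ?g k) = lext (graft_last ts) (\<Sum>k\<in>{0..<?a}. ?g1 k)"
    unfolding lext_sum
  proof (rule sum.cong[OF refl])
    fix k
    assume "k \<in> {0..<?a}"
    then obtain u where "take_verts k ?F = take_verts k [t1]" "drop_verts k [t1] = [u]"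
      "drop_verts k ?F = [Node (u # ts)]"
      using split_verts_Node_Cons(1) by fastforce
    then show "?g k = lext (graft_last ts) (?g1 k)"
      by (simp add: lext_graft_last_hmul)
  qed
  also have "(\<Sum>k\<in>{0..<?a}. ?g1 k) = - left_antipode [t1]"
    by (subst (2) left_antipode.simps) simp
  finally show ?thesis
    by (subst left_antipode.simps) (simp add: lext_uminus)
qed

function leftmost_leaf :: "ptree \<Rightarrow> nat list" where
  "leftmost_leaf (Node []) = []"
| "leftmost_leaf (Node (t # ts)) = 0 # leftmost_leaf t"
  by pat_completeness auto
termination
  by (relation "measure size") auto

lemma Cons_in_positions: "i < length ts \<Longrightarrow> p \<in> positions (ts ! i) \<Longrightarrow> i # p \<in> positions (Node ts)"
  by (subst positions.simps) blast

lemma leftmost_leaf_in_positions: "leftmost_leaf t \<in> positions t"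
proof (induction t rule: leftmost_leaf.induct)
  case 1
  then show ?case by simp
next
  case (2 t ts)
  then show ?case
    using Cons_in_positions[of 0 "t # ts" "leftmost_leaf t"] by (simp del: positions.simps)
qed

lemma geq_hl_Nil: "geq_hl s []"
  by (simp add: geq_hl_def geq_high_def)

lemma geq_left_Cons: "geq_left (a # x) (a # y) \<longleftrightarrow> geq_left x y"
proof
  assume "geq_left (a # x) (a # y)"
  then obtain u i j p q where "\<not> prefix x y" "\<not> prefix y x"
    and "a # x = u @ i # p" "a # y = u @ j # q" "i < j"
    unfolding geq_left_def by auto
  then show "geq_left x y"
    unfolding geq_left_def by (cases u) auto
next
  assume "geq_left x y"
  then obtain u i j p q where np: "\<not> prefix x y" "\<not> prefix y x"
    and "x = u @ i # p" "y = u @ j # q" "i < j"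
    unfolding geq_left_def by blast
  then have "\<exists>u i j p q. a # x = u @ i # p \<and> a # y = u @ j # q \<and> i < j"
    by (intro exI[of _ "a # u"]) auto
  with np show "geq_left (a # x) (a # y)"
    unfolding geq_left_def by simp
qed

lemma geq_hl_Cons: "geq_hl (a # x) (a # y) \<longleftrightarrow> geq_hl x y"
  by (simp add: geq_hl_def geq_high_def geq_left_Cons)

lemma common_prefix_unique:
  "u @ i # p = u' @ i' # p' \<Longrightarrow> u @ j # q = u' @ j' # q' \<Longrightarrow> i \<noteq> j \<Longrightarrow> i' \<noteq> j' \<Longrightarrow> u = u'"
proof (induction u arbitrary: u')
  case Nil
  then show ?case by (cases u') auto
next
  case (Cons c w)
  then show ?case by (cases u') auto
qed

lemma geq_hl_antisym: "geq_hl x y \<Longrightarrow> geq_hl y x \<Longrightarrow> x = y"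
proof (cases "geq_high x y")
  case True
  assume "geq_hl y x"
  with True show "x = y"
    unfolding geq_hl_def geq_high_def geq_left_def using prefix_order.antisym by blast
next
  case False
  assume "geq_hl x y" "geq_hl y x"
  with False have "geq_left x y" "geq_left y x"
    unfolding geq_hl_def geq_high_def geq_left_def by blast+
  then obtain u i j p q u' i' j' p' q' where
    "x = u @ i # p" "y = u @ j # q" "i < j" "y = u' @ i' # p'" "x = u' @ j' # q'" "i' < j'"
    unfolding geq_left_def by blast
  moreover from this have "u = u'"
    by (metis common_prefix_unique less_irrefl)
  ultimately show "x = y"
    by auto
qed

lemma leftmost_leaf_greatest: "s \<in> positions t \<Longrightarrow> geq_hl (leftmost_leaf t) s"
proof (induction t arbitrary: s rule: leftmost_leaf.induct)
  case 1
  then show ?case by (simp add: geq_hl_Nil)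
next
  case (2 t ts)
  show ?case
  proof (cases s)
    case Nil
    then show ?thesis by (simp add: geq_hl_Nil)
  next
    case (Cons i p)
    with "2.prems" have p: "p \<in> positions ((t # ts) ! i)"
      by auto
    show ?thesis
    proof (cases "i = 0")
      case True
      with 2 Cons p show ?thesis
        by (simp add: geq_hl_Cons)
    next
      case False
      then have "geq_left (0 # leftmost_leaf t) (i # p)"
        unfolding geq_left_def by (auto intro!: exI[of _ "[]"])
      with Cons show ?thesis
        by (simp add: geq_hl_def)
    qed
  qed
qed

lemma greatest_vertex_eq_leftmost_leaf: "greatest_vertex t = leftmost_leaf t"
  unfolding greatest_vertex_def
  by (rule the_equality)
    (use leftmost_leaf_in_positions leftmost_leaf_greatest geq_hl_antisym in blast)+

lemma left_edges_leaf: "left_edges (Node []) = {}"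
  by (auto simp: left_edges_def greatest_vertex_eq_leftmost_leaf)

lemma left_edges_Node_Cons: "left_edges (Node (t1 # ts)) = insert [0] ((#) 0 ` left_edges t1)"
proof -
  have "v \<noteq> [] \<and> prefix v (0 # leftmost_leaf t1) \<longleftrightarrow>
      v = [0] \<or> (\<exists>w. v = 0 # w \<and> w \<noteq> [] \<and> prefix w (leftmost_leaf t1))" for v
    by (cases v; cases "tl v") auto
  then show ?thesis
    by (auto simp: left_edges_def greatest_vertex_eq_leftmost_leaf)
qed

lemma finite_left_edges: "finite (left_edges t)"
  by (induction t rule: leftmost_leaf.induct) (auto simp: left_edges_leaf left_edges_Node_Cons)

lemma Nil_notin_left_edges: "[] \<notin> left_edges t"
  by (simp add: left_edges_def)

definition hl_enum :: "nat list list \<Rightarrow> nat list set \<Rightarrow> bool" where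
  "hl_enum rs X \<longleftrightarrow> distinct rs \<and> set rs = X \<and> sorted_wrt geq_hl rs"

lemma hl_enum_unique: "hl_enum xs X \<Longrightarrow> hl_enum ys X \<Longrightarrow> xs = ys"
proof (induction xs arbitrary: ys X)
  case Nil
  then show ?case by (simp add: hl_enum_def)
next
  case (Cons x xs)
  then obtain y ys' where ys: "ys = y # ys'"
    by (cases ys) (auto simp: hl_enum_def)
  have "x = y"
  proof (rule ccontr)
    assume "x \<noteq> y"
    with Cons.prems ys have "geq_hl y x" "geq_hl x y"
      by (auto simp: hl_enum_def set_eq_iff)
    with \<open>x \<noteq> y\<close> show False
      using geq_hl_antisym by blast
  qed
  with Cons.prems ys have "hl_enum xs (set xs)" "hl_enum ys' (set xs)"
    by (auto simp: hl_enum_def insert_ident)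
  with Cons.IH ys \<open>x = y\<close> show ?case
    by blast
qed

lemma cut_roots_eqI: "hl_enum rs (insert [] c) \<Longrightarrow> cut_roots t c = rs"
  unfolding cut_roots_def
  by (rule the_equality) (use hl_enum_unique in \<open>auto simp: hl_enum_def\<close>)

lemma hl_enum_map_Cons: "hl_enum rs X \<Longrightarrow> hl_enum (map ((#) a) rs) ((#) a ` X)"
  by (auto simp: hl_enum_def distinct_map sorted_wrt_map geq_hl_Cons)

lemma hl_enum_snoc_root_iff: "[] \<notin> X \<Longrightarrow> hl_enum (rs @ [[]]) (insert [] X) \<longleftrightarrow> hl_enum rs X"
  unfolding hl_enum_def by (auto simp: sorted_wrt_append geq_hl_Nil insert_ident)

lemma ex_hl_enum_left_cut: "c \<subseteq> left_edges t \<Longrightarrow> \<exists>rs. hl_enum rs c"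
proof (induction t arbitrary: c rule: leftmost_leaf.induct)
  case 1
  then show ?case
    by (intro exI[of _ "[]"]) (simp add: left_edges_leaf hl_enum_def)
next
  case (2 t1 ts)
  define c1 where "c1 = {w \<in> left_edges t1. 0 # w \<in> c}"
  have "c1 \<subseteq> left_edges t1"
    by (auto simp: c1_def)
  with "2.IH" obtain rs1 where rs1: "hl_enum rs1 c1"
    by blast
  have "[] \<notin> c1"
    by (simp add: c1_def Nil_notin_left_edges)
  with rs1 have rs1_root: "hl_enum (rs1 @ [[]]) (insert [] c1)"
    by (simp add: hl_enum_snoc_root_iff)
  have "c \<subseteq> insert [0] ((#) 0 ` left_edges t1)"
    using "2.prems" by (simp add: left_edges_Node_Cons)
  then have "c = (#) 0 ` (if [0] \<in> c then insert [] c1 else c1)"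
    by (auto simp: c1_def)
  then show ?case
    using hl_enum_map_Cons[OF rs1] hl_enum_map_Cons[OF rs1_root] by (cases "[0] \<in> c") auto
qed

lemma cut_roots_left_cut:
  assumes "c \<subseteq> left_edges t"
  obtains rs where "hl_enum rs c" "cut_roots t c = rs @ [[]]"
proof -
  obtain rs where "hl_enum rs c"
    using ex_hl_enum_left_cut[OF assms] by blast
  moreover have "[] \<notin> c"
    using assms Nil_notin_left_edges by blast
  ultimately show thesis
    using that cut_roots_eqI hl_enum_snoc_root_iff by blast
qed

lemma prune_cong:
  "(\<And>w. w \<noteq> [] \<Longrightarrow> P (p @ w) = Q (q @ w)) \<Longrightarrow> prune P p t = prune Q q t"
proof (induction t arbitrary: p q)
  case (Node ts)
  have filter: "filter (\<lambda>(i, s). \<not> P (p @ [i])) (zip [0..<length ts] ts) =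
      filter (\<lambda>(i, s). \<not> Q (q @ [i])) (zip [0..<length ts] ts)"
    using Node.prems[of "[_]"] by (intro filter_cong) auto
  have "prune P (p @ [i]) s = prune Q (q @ [i]) s" if "(i, s) \<in> set (zip [0..<length ts] ts)" for i s
    using that Node by (auto dest: set_zip_rightD)
  then show ?case
    unfolding prune.simps filter by (auto intro!: map_cong)
qed

lemma prune_id: "(\<And>w. w \<noteq> [] \<Longrightarrow> \<not> P (p @ w)) \<Longrightarrow> prune P p t = t"
proof (induction t arbitrary: p)
  case (Node ts)
  have filter: "filter (\<lambda>(i, s). \<not> P (p @ [i])) (zip [0..<length ts] ts) = zip [0..<length ts] ts"
    using Node.prems[of "[_]"] by (intro filter_True) auto
  have "prune P (p @ [i]) s = s" if "(i, s) \<in> set (zip [0..<length ts] ts)" for i s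
    using that Node by (auto dest: set_zip_rightD)
  then have map: "map (\<lambda>(i, s). prune P (p @ [i]) s) (zip [0..<length ts] ts) = map snd (zip [0..<length ts] ts)"
    by (intro map_cong refl) auto
  show ?case
    by (simp only: prune.simps filter map map_snd_zip length_upt diff_zero)
qed

lemma prune_Node_Cons_root:
  assumes c: "\<And>v. v \<in> c \<Longrightarrow> \<exists>w. v = 0 # w"
  shows "prune (\<lambda>w. w \<in> c) [] (Node (t1 # ts)) =
           Node ((if [0] \<in> c then [] else [prune (\<lambda>w. w \<in> c) [0] t1]) @ ts)"
proof -
  define zs where "zs = zip [1..<Suc (length ts)] ts"
  have zip: "zip [0..<Suc (length ts)] (t1 # ts) = (0, t1) # zs"
    unfolding zs_def by (simp del: upt_Suc add: upt_conv_Cons)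
  have zs: "1 \<le> i" if "(i, s) \<in> set zs" for i s
    using set_zip_leftD[OF that[unfolded zs_def]] by (simp del: upt_Suc)
  have filter: "filter (\<lambda>(i, s). [i] \<notin> c) zs = zs"
    using zs c by (auto intro!: filter_True)
  have "prune (\<lambda>w. w \<in> c) [i] s = s" if "(i, s) \<in> set zs" for i s
    using zs[OF that] c by (intro prune_id[where p = "[i]", simplified]) fastforce
  then have "map (\<lambda>(i, s). prune (\<lambda>w. w \<in> c) [i] s) zs = map snd zs"
    by (auto intro!: map_cong)
  also have "\<dots> = ts"
    by (simp add: zs_def del: upt_Suc)
  finally show ?thesis
    by (subst prune.simps) (simp del: upt_Suc add: zip filter)
qed

lemma cut_piece_Node_Cons_child:
  assumes "\<And>w. w \<noteq> [] \<Longrightarrow> (0 # r @ w \<in> c) = (r @ w \<in> c1)"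
  shows "cut_piece (Node (t1 # ts)) c (0 # r) = cut_piece t1 c1 r"
  unfolding cut_piece_def subtree.simps nth_Cons_0
  by (rule prune_cong) (use assms in simp)

lemma Wc_left_cut_nonempty: "c \<subseteq> left_edges t \<Longrightarrow> Wc t c \<noteq> []"
  by (auto simp: Wc_def elim: cut_roots_left_cut)

lemma Wc_Node_Cons_keep:
  assumes c1: "c1 \<subseteq> left_edges t1"
  shows "Wc (Node (t1 # ts)) ((#) 0 ` c1) = butlast (Wc t1 c1) @ [Node (last (Wc t1 c1) # ts)]"
proof -
  let ?c = "(#) 0 ` c1"
  obtain rs where rs: "hl_enum rs c1" and roots1: "cut_roots t1 c1 = rs @ [[]]"
    using cut_roots_left_cut[OF c1] .
  have "[] \<notin> c1"
    using c1 Nil_notin_left_edges by blast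
  have "hl_enum (map ((#) 0) rs @ [[]]) (insert [] ?c)"
    using hl_enum_map_Cons[OF rs] by (subst hl_enum_snoc_root_iff) auto
  then have roots: "cut_roots (Node (t1 # ts)) ?c = map ((#) 0) rs @ [[]]"
    by (rule cut_roots_eqI)
  have "prune (\<lambda>w. w \<in> ?c) [0] t1 = cut_piece t1 c1 []"
    unfolding cut_piece_def subtree.simps by (rule prune_cong) auto
  with \<open>[] \<notin> c1\<close> have "cut_piece (Node (t1 # ts)) ?c [] = Node (cut_piece t1 c1 [] # ts)"
    unfolding cut_piece_def subtree.simps by (subst prune_Node_Cons_root) auto
  moreover have "cut_piece (Node (t1 # ts)) ?c (0 # r) = cut_piece t1 c1 r" for r
    by (rule cut_piece_Node_Cons_child) auto
  ultimately show ?thesis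
    by (simp add: Wc_def roots roots1)
qed

lemma Wc_Node_Cons_cut:
  assumes c1: "c1 \<subseteq> left_edges t1"
  shows "Wc (Node (t1 # ts)) (insert [0] ((#) 0 ` c1)) = Wc t1 c1 @ [Node ts]"
proof -
  let ?c = "insert [0] ((#) 0 ` c1)"
  obtain rs where rs: "hl_enum rs c1" and roots1: "cut_roots t1 c1 = rs @ [[]]"
    using cut_roots_left_cut[OF c1] .
  have "[] \<notin> c1"
    using c1 Nil_notin_left_edges by blast
  with rs have "hl_enum (rs @ [[]]) (insert [] c1)"
    by (simp add: hl_enum_snoc_root_iff)
  from hl_enum_map_Cons[OF this] have "hl_enum (map ((#) 0) (rs @ [[]])) ?c"
    by simp
  then have "hl_enum (map ((#) 0) (rs @ [[]]) @ [[]]) (insert [] ?c)"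
    by (subst hl_enum_snoc_root_iff) auto
  then have roots: "cut_roots (Node (t1 # ts)) ?c = map ((#) 0) (rs @ [[]]) @ [[]]"
    by (rule cut_roots_eqI)
  have "cut_piece (Node (t1 # ts)) ?c [] = Node ts"
    unfolding cut_piece_def subtree.simps by (subst prune_Node_Cons_root) auto
  moreover have "cut_piece (Node (t1 # ts)) ?c (0 # r) = cut_piece t1 c1 r" for r
    by (rule cut_piece_Node_Cons_child) auto
  ultimately show ?thesis
    by (simp add: Wc_def roots roots1)
qed

definition left_cut_sum :: "ptree \<Rightarrow> 'k::field H" where
  "left_cut_sum t = (\<Sum>c\<in>left_cuts t. Poly_Mapping.single (Wc t c) ((-1) ^ card c))"

lemma left_cut_sum_leaf: "left_cut_sum (Node []) = bas [Node []]"
proof -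
  have "cut_roots (Node []) {} = [[]]"
    by (rule cut_roots_eqI) (simp add: hl_enum_def)
  then show ?thesis
    by (simp add: left_cut_sum_def left_cuts_def left_edges_leaf bas_def Wc_def cut_piece_def)
qed

lemma sum_Pow_insert:
  assumes "finite A" "a \<notin> A"
  shows "(\<Sum>c\<in>Pow (insert a A). g c) = (\<Sum>c\<in>Pow A. g c) + (\<Sum>c\<in>Pow A. g (insert a c))"
proof -
  have "inj_on (insert a) (Pow A)"
    using assms(2) by (auto simp: inj_on_def insert_ident)
  moreover have "Pow A \<inter> insert a ` Pow A = {}"
    using assms(2) by auto
  ultimately show ?thesis
    using assms(1) by (simp add: Pow_insert sum.union_disjoint sum.reindex)
qed

lemma sum_Pow_image:
  assumes "inj f"
  shows "(\<Sum>c\<in>Pow (f ` A). g c) = (\<Sum>c\<in>Pow A. g (f ` c))"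
proof -
  have "Pow (f ` A) = image f ` Pow A"
    by (force simp: subset_image_iff)
  moreover have "inj_on (image f) (Pow A)"
    by (rule inj_onI) (simp add: inj_image_eq_iff[OF assms])
  ultimately show ?thesis
    by (simp add: sum.reindex)
qed

lemma sum_left_cuts_Node_Cons:
  "(\<Sum>c\<in>left_cuts (Node (t1 # ts)). g c) =
     (\<Sum>c\<in>left_cuts t1. g ((#) 0 ` c)) + (\<Sum>c\<in>left_cuts t1. g (insert [0] ((#) 0 ` c)))"
proof -
  have "[0] \<notin> (#) 0 ` left_edges t1"
    using Nil_notin_left_edges by auto
  then show ?thesis
    unfolding left_cuts_def left_edges_Node_Cons
    by (simp add: sum_Pow_insert sum_Pow_image finite_left_edges)
qed

lemma card_left_cut_Node_Cons:
  assumes "c \<subseteq> left_edges t1"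
  shows "card ((#) 0 ` c) = card c" "card (insert [0] ((#) 0 ` c)) = Suc (card c)"
proof -
  have "finite c" "[0] \<notin> (#) 0 ` c"
    using assms finite_left_edges Nil_notin_left_edges finite_subset by blast+
  then show "card ((#) 0 ` c) = card c" "card (insert [0] ((#) 0 ` c)) = Suc (card c)"
    by (simp_all add: card_image)
qed

lemma left_cut_sum_Node_Cons:
  "(left_cut_sum (Node (t1 # ts)) :: 'k::field H) =
     lext (graft_last ts) (left_cut_sum t1) - hmul (left_cut_sum t1) (bas [Node ts])"
proof -
  let ?t = "Node (t1 # ts)"
  let ?m = "\<lambda>c. Poly_Mapping.single (Wc ?t c) ((-1) ^ card c) :: 'k H"
  let ?m1 = "\<lambda>c. Poly_Mapping.single (Wc t1 c) ((-1) ^ card c) :: 'k H"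
  have "?m ((#) 0 ` c) = lext (graft_last ts) (?m1 c)" if "c \<in> left_cuts t1" for c
    using that Wc_left_cut_nonempty[of c t1]
    by (simp add: left_cuts_def Wc_Node_Cons_keep card_left_cut_Node_Cons lext_single graft_last_def bas_def)
  moreover have "?m (insert [0] ((#) 0 ` c)) = - hmul (?m1 c) (bas [Node ts])" if "c \<in> left_cuts t1" for c
    using that
    by (simp add: left_cuts_def Wc_Node_Cons_cut card_left_cut_Node_Cons hmul_single_bas single_uminus)
  ultimately show ?thesis
    unfolding left_cut_sum_def sum_left_cuts_Node_Cons lext_sum hmul_sum_left
    by (simp add: sum_negf)
qed

lemma left_antipode_tree: "(left_antipode [t] :: 'k::field H) = - left_cut_sum t"
proof (induction t rule: leftmost_leaf.induct)
  case 1
  then show ?case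
    by (simp add: left_antipode_leaf left_cut_sum_leaf)
next
  case (2 t1 ts)
  then show ?case
    by (simp add: left_antipode_Node_Cons left_cut_sum_Node_Cons lext_uminus hmul_uminus_left)
qed

theorem proposition15:
  fixes t :: ptree
  shows "(antipode [t] :: 'k::field H) =
           - (\<Sum>c\<in>left_cuts t. Poly_Mapping.single (Wc t c) ((-1) ^ card c))"
  using left_antipode_tree[of t] by (simp add: antipode_eq_left_antipode left_cut_sum_def)

end
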